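(* Let $A$ be a finite set. The action of $\Sigma_A$ on $\vec P(Y^A)_{\mathbf0}^{\mathbf1}$ is free.
   Context: A precubical set ($\square$-set) $K$ is a sequence of pairwise disjoint sets $(K[n])_{n\ge0}$ with face maps $d^\varepsilon_i:K[n]\to K[n-1]$ ($1\le i\le n$, $\varepsilon\in\{0,1\}$) satisfying $d^\varepsilon_i d^\eta_j=d^\eta_{j-1}d^\varepsilon_i$ for $i<j$; bi-pointed $\square$-sets have chosen vertices $\mathbf0,\mathbf1\in K[0]$. Geometric realization: $|K|=\coprod_n K[n]\times[0,1]^n/\sim$ with $(d^\varepsilon_i c,\mathbf x)\sim(c,\delta^\varepsilon_i\mathbf x)$, $\delta^\varepsilon_i$ inserting $\varepsilon$ as $i$-th coordinate; $[c;\mathbf x]$ is the class. A path $\alpha:[0,1]\to|K|$ is a d-path if there are $0=t_0<\dots<t_m=1$, $c_k\in K[n_k]$ and continuous $\beta_k:[t_{k-1},t_k]\to[0,1]^{n_k}$ with non-decreasing coordinates such that $\alpha(t)=[c_k;\beta_k(t)]$ on $[t_{k-1},t_k]$. $\vec P(K)_{\mathbf0}^{\mathbf1}$ is the space of d-paths from $\mathbf0$ to $\mathbf1$. $Y^A$ is the bi-pointed $\square$-set where $Y^A[k]$ is the set of pairs $(c,<)$ with $c:A\to\{0,*,1\}$, $|c^{-1}( * )|=k$, and $<$ a strict total order on $c^{-1}( * )$; if $c^{-1}( * )=\{a_1<\dots<a_k\}$ then $d^\varepsilon_i(c,<)=(c',<')$ where $c'(a_i)=\varepsilon$, $c'=c$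 elsewhere, and $<'$ is the restriction of $<$ to $c^{-1}( * )\setminus\{a_i\}$; $\mathbf0=(\text{const}_0,\emptyset)$, $\mathbf1=(\text{const}_1,\emptyset)$. $\Sigma_A$ acts on $Y^A$ from the right by $(c,<)\sigma=(c\circ\sigma,<\sigma)$ with $a\,(<\sigma)\,b$ iff $\sigma(a)<\sigma(b)$, inducing an action $(\alpha\sigma)(t)=\alpha(t)\sigma$ on $\vec P(Y^A)_{\mathbf0}^{\mathbf1}$, where $[c;\mathbf x]\sigma=[c\sigma;\mathbf x]$. *)

theory Defs
  imports "HOL-Analysis.Analysis" "HOL-Combinatorics.Permutations"
begin

text \<open>A precubical set is given by a carrier of cells K, a dimension function dm
  (c is in K[dm c]) and face maps face i e c (for 1 <= i <= dm c); the boolean e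
  encodes epsilon (False = 0, True = 1).\<close>

definition eps_real :: "bool \<Rightarrow> real" where
  "eps_real e = (if e then 1 else 0)"

text \<open>coface delta^e_i : inserts e as i-th coordinate (i is 1-based)\<close>
definition ins_at :: "nat \<Rightarrow> real \<Rightarrow> real list \<Rightarrow> real list" where
  "ins_at i v x = take (i - 1) x @ v # drop (i - 1) x"

definition cube_pts :: "'c set \<Rightarrow> ('c \<Rightarrow> nat) \<Rightarrow> ('c \<times> real list) set" where
  "cube_pts K dm = {(c, x). c \<in> K \<and> length x = dm c \<and> (\<forall>v\<in>set x. 0 \<le> v \<and> v \<le> 1)}"

definition glue_step :: "'c set \<Rightarrow> ('c \<Rightarrow> nat) \<Rightarrow> (nat \<Rightarrow> bool \<Rightarrow> 'c \<Rightarrow> 'c)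
    \<Rightarrow> 'c \<times> real list \<Rightarrow> 'c \<times> real list \<Rightarrow> bool" where
  "glue_step K dm face p q \<longleftrightarrow>
     (\<exists>c x i e. 1 \<le> i \<and> i \<le> dm c \<and> q = (c, ins_at i (eps_real e) x)
        \<and> p = (face i e c, x) \<and> q \<in> cube_pts K dm \<and> p \<in> cube_pts K dm)"

definition real_cls :: "'c set \<Rightarrow> ('c \<Rightarrow> nat) \<Rightarrow> (nat \<Rightarrow> bool \<Rightarrow> 'c \<Rightarrow> 'c)
    \<Rightarrow> 'c \<times> real list \<Rightarrow> ('c \<times> real list) set" where
  "real_cls K dm face p = {q. equivclp (glue_step K dm face) p q}"

definition realization :: "'c set \<Rightarrow> ('c \<Rightarrow> nat) \<Rightarrow> (nat \<Rightarrow> bool \<Rightarrow> 'c \<Rightarrow> 'c)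
    \<Rightarrow> ('c \<times> real list) set set" where
  "realization K dm face = real_cls K dm face ` cube_pts K dm"

definition is_dpath :: "'c set \<Rightarrow> ('c \<Rightarrow> nat) \<Rightarrow> (nat \<Rightarrow> bool \<Rightarrow> 'c \<Rightarrow> 'c)
    \<Rightarrow> (real \<Rightarrow> ('c \<times> real list) set) \<Rightarrow> bool" where
  "is_dpath K dm face \<alpha> \<longleftrightarrow>
     (\<exists>(m::nat) (t::nat \<Rightarrow> real) (c::nat \<Rightarrow> 'c) (\<beta>::nat \<Rightarrow> real \<Rightarrow> real list).
        m \<ge> 1 \<and> t 0 = 0 \<and> t m = 1 \<and> (\<forall>k<m. t k < t (Suc k)) \<and>
        (\<forall>k\<in>{1..m}.
           c k \<in> K \<and>
           (\<forall>s\<in>{t (k - 1)..t k}. (c k, \<beta> k s) \<in> cube_pts K dm) \<and>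
           (\<forall>j < dm (c k). continuous_on {t (k - 1)..t k} (\<lambda>s. \<beta> k s ! j)
                           \<and> mono_on {t (k - 1)..t k} (\<lambda>s. \<beta> k s ! j)) \<and>
           (\<forall>s\<in>{t (k - 1)..t k}. \<alpha> s = real_cls K dm face (c k, \<beta> k s))))"

text \<open>the space of d-paths from v0 to v1 (as functions on [0,1]; values outside
  [0,1] are irrelevant)\<close>
definition dpaths :: "'c set \<Rightarrow> ('c \<Rightarrow> nat) \<Rightarrow> (nat \<Rightarrow> bool \<Rightarrow> 'c \<Rightarrow> 'c) \<Rightarrow> 'c \<Rightarrow> 'c
    \<Rightarrow> (real \<Rightarrow> ('c \<times> real list) set) set" where
  "dpaths K dm face v0 v1 =
     {\<alpha>. is_dpath K dm face \<alpha> \<and> \<alpha> 0 = real_cls K dm face (v0, [])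
          \<and> \<alpha> 1 = real_cls K dm face (v1, [])}"

datatype cv = Zero | Star | One

type_synonym 'a ycell = "('a \<Rightarrow> cv) \<times> ('a \<times> 'a) set"

definition stars :: "('a \<Rightarrow> cv) \<Rightarrow> 'a set" where
  "stars c = {a. c a = Star}"

text \<open>functions A -> {0,*,1} are represented by functions equal to Zero outside A\<close>
definition Y_cells :: "'a set \<Rightarrow> 'a ycell set" where
  "Y_cells A = {(c, r). (\<forall>a. a \<notin> A \<longrightarrow> c a = Zero) \<and> r \<subseteq> stars c \<times> stars c
                      \<and> strict_linear_order_on (stars c) r}"

definition Y_dim :: "'a ycell \<Rightarrow> nat" where
  "Y_dim cr = card (stars (fst cr))"

text \<open>the i-th element a_i of c^{-1}(*) w.r.t. the order (1-based)\<close>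
definition ith_star :: "nat \<Rightarrow> 'a ycell \<Rightarrow> 'a" where
  "ith_star i cr = (THE a. a \<in> stars (fst cr) \<and> card {b \<in> stars (fst cr). (b, a) \<in> snd cr} = i - 1)"

definition Y_face :: "nat \<Rightarrow> bool \<Rightarrow> 'a ycell \<Rightarrow> 'a ycell" where
  "Y_face i e cr =
     (let a = ith_star i cr; c' = (fst cr)(a := (if e then One else Zero))
      in (c', snd cr \<inter> (stars c' \<times> stars c')))"

definition Y_zero :: "'a ycell" where "Y_zero = (\<lambda>_. Zero, {})"
definition Y_one :: "'a set \<Rightarrow> 'a ycell" where
  "Y_one A = ((\<lambda>a. if a \<in> A then One else Zero), {})"

definition cell_act :: "'a ycell \<Rightarrow> ('a \<Rightarrow> 'a) \<Rightarrow> 'a ycell" where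
  "cell_act cr \<sigma> = (fst cr \<circ> \<sigma>, {(a, b). (\<sigma> a, \<sigma> b) \<in> snd cr})"

definition pt_act :: "('a ycell \<times> real list) set \<Rightarrow> ('a \<Rightarrow> 'a) \<Rightarrow> ('a ycell \<times> real list) set" where
  "pt_act P \<sigma> = (\<lambda>(cr, x). (cell_act cr \<sigma>, x)) ` P"

definition path_act :: "(real \<Rightarrow> ('a ycell \<times> real list) set) \<Rightarrow> ('a \<Rightarrow> 'a)
    \<Rightarrow> (real \<Rightarrow> ('a ycell \<times> real list) set)" where
  "path_act \<alpha> \<sigma> = (\<lambda>t. pt_act (\<alpha> t) \<sigma>)"

definition Y_dpaths :: "'a set \<Rightarrow> (real \<Rightarrow> ('a ycell \<times> real list) set) set" where
  "Y_dpaths A = dpaths (Y_cells A) Y_dim Y_face Y_zero (Y_one A)"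

end

theory Submission
  imports Defs
begin

text \<open>A point of the realization of \<open>Y\<^sup>A\<close> has well-defined coordinates in
  \<open>[0,1]\<^sup>A\<close> (0 or 1 on the non-star coordinates) together with a linear order on its
  coordinates that lie strictly between 0 and 1: both are invariant under the gluing of faces,
  and the action of \<open>\<sigma>\<close> permutes coordinates accordingly. Along a d-path from \<open>0\<close> to \<open>1\<close>
  each coordinate \<open>a\<close> is continuous and passes through 1/2. If \<open>\<sigma>\<close> fixes the path, then at
  that moment \<open>\<sigma>\<close> is an automorphism of the finite linearly ordered set of open coordinates,
  which contains \<open>a\<close>; finite linear orders are rigid, so \<open>\<sigma> a = a\<close>.\<close>

lemma equivclp_invariant:
  assumes "equivclp g p q" and "\<And>p q. g p q \<Longrightarrow> f p = f q"
  shows "f p = f q"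
  using assms(1) by induction (use assms(2) in metis)+

definition order_rank :: "'a set \<Rightarrow> ('a \<times> 'a) set \<Rightarrow> 'a \<Rightarrow> nat" where
  "order_rank S r a = card {b \<in> S. (b, a) \<in> r}"

lemma order_rank_less:
  assumes "finite S" "irrefl r" "trans r" "a \<in> S" "(a, b) \<in> r"
  shows "order_rank S r a < order_rank S r b"
proof -
  have "{x \<in> S. (x, a) \<in> r} \<subset> {x \<in> S. (x, b) \<in> r}"
    using assms(2-5) by (auto simp: irrefl_def dest: transD)
  then show ?thesis
    unfolding order_rank_def using assms(1) by (simp add: psubset_card_mono)
qed

lemma order_rank_less_card:
  assumes "finite S" "irrefl r" "a \<in> S"
  shows "order_rank S r a < card S"
proof -
  have "{x \<in> S. (x, a) \<in> r} \<subset> S" using assms by (auto simp: irrefl_def)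
  then show ?thesis unfolding order_rank_def using assms(1) by (simp add: psubset_card_mono)
qed

lemma order_rank_less_iff:
  assumes "finite S" "strict_linear_order_on S r" "a \<in> S" "b \<in> S"
  shows "order_rank S r a < order_rank S r b \<longleftrightarrow> (a, b) \<in> r"
proof -
  have "irrefl r" "trans r" "total_on S r"
    using assms(2) by (auto simp: strict_linear_order_on_def)
  then show ?thesis
    using order_rank_less[OF assms(1)] assms(3,4)
    by (metis irrefl_def less_asym less_irrefl total_on_def)
qed

lemma inj_on_order_rank:
  assumes "finite S" "strict_linear_order_on S r"
  shows "inj_on (order_rank S r) S"
  by (rule inj_onI) (metis assms order_rank_less_iff less_irrefl strict_linear_order_on_def total_on_def)

lemma order_rank_image:
  assumes "finite S" "strict_linear_order_on S r"
  shows "order_rank S r ` S = {..<card S}"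
proof (rule card_subset_eq)
  show "order_rank S r ` S \<subseteq> {..<card S}"
    using assms order_rank_less_card by (auto simp: strict_linear_order_on_def)
  show "card (order_rank S r ` S) = card {..<card S}"
    using card_image[OF inj_on_order_rank[OF assms]] by simp
qed simp

lemma order_rank_vimage:
  assumes "bij \<sigma>"
  shows "order_rank (\<sigma> -` S) {(a, b). (\<sigma> a, \<sigma> b) \<in> r} a = order_rank S r (\<sigma> a)"
proof -
  have "{b \<in> \<sigma> -` S. (b, a) \<in> {(a, b). (\<sigma> a, \<sigma> b) \<in> r}} = \<sigma> -` {b \<in> S. (b, \<sigma> a) \<in> r}"
    by auto
  moreover have "card (\<sigma> -` {b \<in> S. (b, \<sigma> a) \<in> r}) = card {b \<in> S. (b, \<sigma> a) \<in> r}"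
    using assms by (intro card_vimage_inj) (auto simp: bij_is_inj bij_is_surj)
  ultimately show ?thesis
    unfolding order_rank_def by simp
qed

lemma order_rank_Diff_singleton:
  assumes "finite S" "a \<in> S" "b \<in> S - {a}"
  shows "order_rank (S - {a}) (r \<inter> (S - {a}) \<times> (S - {a})) b
           = (if (a, b) \<in> r then order_rank S r b - 1 else order_rank S r b)"
proof -
  have "{x \<in> S - {a}. (x, b) \<in> r \<inter> (S - {a}) \<times> (S - {a})} = {x \<in> S. (x, b) \<in> r} - {a}"
    using assms(3) by auto
  then show ?thesis
    unfolding order_rank_def using assms(2) by (simp add: card_Diff_singleton_if)
qed

lemma strict_linear_order_on_restrict:
  assumes "strict_linear_order_on S r" "T \<subseteq> S"
  shows "strict_linear_order_on T (r \<inter> T \<times> T)"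
  unfolding strict_linear_order_on_def
proof (intro conjI)
  show "trans (r \<inter> T \<times> T)"
    using assms(1) by (intro trans_Int) (auto simp: strict_linear_order_on_def intro: transI)
  show "irrefl (r \<inter> T \<times> T)"
    using assms(1) by (auto simp: strict_linear_order_on_def irrefl_def)
  show "total_on T (r \<inter> T \<times> T)"
    using assms by (auto simp: strict_linear_order_on_def total_on_def)
qed

lemma strict_linear_order_automorphism_fixes:
  assumes "finite I" "strict_linear_order_on I R" "bij \<sigma>"
    and "\<sigma> -` I = I" and "{(a, b). (\<sigma> a, \<sigma> b) \<in> R} = R" and "a \<in> I"
  shows "\<sigma> a = a"
proof -
  have "order_rank I R (\<sigma> a) = order_rank I R a"
    using order_rank_vimage[OF assms(3), of I R a] assms(4,5) by simp
  moreover have "\<sigma> a \<in> I" using assms(4,6) by blast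
  ultimately show ?thesis
    using inj_on_order_rank[OF assms(1,2)] assms(6) by (meson inj_onD)
qed

lemma discrete_ivt:
  fixes lo hi :: "nat \<Rightarrow> 'a::linorder"
  assumes "1 \<le> m" "lo 1 \<le> y" "y \<le> hi m" "\<And>k. 1 \<le> k \<Longrightarrow> k < m \<Longrightarrow> hi k = lo (Suc k)"
  shows "\<exists>k\<in>{1..m}. lo k \<le> y \<and> y \<le> hi k"
  using assms
proof (induction m rule: dec_induct)
  case base
  then show ?case by auto
next
  case (step m)
  show ?case
  proof (cases "y \<le> hi m")
    case True
    then show ?thesis using step by fastforce
  next
    case False
    then show ?thesis
      using step.hyps(1) step.prems(2) step.prems(3)[of m] by (intro bexI[of _ "Suc m"]) auto
  qed
qed

lemma piecewise_ivt:
  fixes t :: "nat \<Rightarrow> 'a::linear_continuum_topology" and f :: "nat \<Rightarrow> 'a \<Rightarrow> 'b::linorder_topology"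
  assumes "1 \<le> m" and "\<And>k. k \<in> {1..m} \<Longrightarrow> t (k - 1) \<le> t k"
    and "\<And>k. k \<in> {1..m} \<Longrightarrow> continuous_on {t (k - 1)..t k} (f k)"
    and "\<And>k. 1 \<le> k \<Longrightarrow> k < m \<Longrightarrow> f k (t k) = f (Suc k) (t k)"
    and "f 1 (t 0) \<le> y" "y \<le> f m (t m)"
  obtains k s where "k \<in> {1..m}" "s \<in> {t (k - 1)..t k}" "f k s = y"
proof -
  obtain k where k: "k \<in> {1..m}" "f k (t (k - 1)) \<le> y" "y \<le> f k (t k)"
    using discrete_ivt[of m "\<lambda>k. f k (t (k - 1))" y "\<lambda>k. f k (t k)"] assms(1,4-6) by auto
  then show ?thesis
    using IVT'[of "f k" "t (k - 1)" y "t k"] assms(2,3) that by auto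
qed

lemma lift_Suc_mono_le_bounded:
  fixes t :: "nat \<Rightarrow> 'a::order"
  assumes "\<And>k. k < m \<Longrightarrow> t k < t (Suc k)" "i \<le> j" "j \<le> m"
  shows "t i \<le> t j"
  using assms(2,3)
proof (induction j rule: dec_induct)
  case (step n)
  then show ?case using assms(1)[of n] by simp
qed simp

lemma ins_at_nth:
  assumes "1 \<le> i" "i - 1 \<le> length x" "j \<le> length x"
  shows "ins_at i v x ! j = (if j < i - 1 then x ! j else if j = i - 1 then v else x ! (j - 1))"
  using assms unfolding ins_at_def by (auto simp: nth_append min_def nth_Cons')

lemma dpathsE:
  assumes "\<alpha> \<in> dpaths K dm face v0 v1"
  obtains m t c \<beta> where "1 \<le> m" "t 0 = 0" "t m = 1" "\<And>k. k < m \<Longrightarrow> t k < t (Suc k)"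
    "\<And>k. k \<in> {1..m} \<Longrightarrow> c k \<in> K"
    "\<And>k j. k \<in> {1..m} \<Longrightarrow> j < dm (c k) \<Longrightarrow> continuous_on {t (k - 1)..t k} (\<lambda>s. \<beta> k s ! j)"
    "\<And>k s. k \<in> {1..m} \<Longrightarrow> s \<in> {t (k - 1)..t k} \<Longrightarrow> (c k, \<beta> k s) \<in> cube_pts K dm"
    "\<And>k s. k \<in> {1..m} \<Longrightarrow> s \<in> {t (k - 1)..t k} \<Longrightarrow> \<alpha> s = real_cls K dm face (c k, \<beta> k s)"
    "\<alpha> 0 = real_cls K dm face (v0, [])" "\<alpha> 1 = real_cls K dm face (v1, [])"
proof -
  from assms obtain m t c \<beta> where "m \<ge> 1" "t 0 = 0" "t m = 1" "\<forall>k<m. t k < t (Suc k)"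
    and seg: "\<forall>k\<in>{1..m}. c k \<in> K \<and>
           (\<forall>s\<in>{t (k - 1)..t k}. (c k, \<beta> k s) \<in> cube_pts K dm) \<and>
           (\<forall>j < dm (c k). continuous_on {t (k - 1)..t k} (\<lambda>s. \<beta> k s ! j)
                           \<and> mono_on {t (k - 1)..t k} (\<lambda>s. \<beta> k s ! j)) \<and>
           (\<forall>s\<in>{t (k - 1)..t k}. \<alpha> s = real_cls K dm face (c k, \<beta> k s))"
    and "\<alpha> 0 = real_cls K dm face (v0, [])" "\<alpha> 1 = real_cls K dm face (v1, [])"
    unfolding dpaths_def is_dpath_def by blast
  then show ?thesis
    by (intro that[of m t c \<beta>]) blast+
qed

text \<open>The coordinates in \<open>[0,1]\<^sup>A\<close> of the point \<open>[(c, r); x]\<close>: a star \<open>a\<close> reads the entry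
  of \<open>x\<close> at the position of \<open>a\<close> in the order \<open>r\<close>.\<close>

definition Y_coord :: "'a ycell \<times> real list \<Rightarrow> 'a \<Rightarrow> real" where
  "Y_coord p a = (case p of ((c, r), x) \<Rightarrow>
     (case c a of Zero \<Rightarrow> 0 | One \<Rightarrow> 1 | Star \<Rightarrow> x ! order_rank (stars c) r a))"

definition Y_open_coords :: "'a ycell \<times> real list \<Rightarrow> 'a set" where
  "Y_open_coords p = {a. 0 < Y_coord p a \<and> Y_coord p a < 1}"

definition Y_open_order :: "'a ycell \<times> real list \<Rightarrow> ('a \<times> 'a) set" where
  "Y_open_order p = snd (fst p) \<inter> Y_open_coords p \<times> Y_open_coords p"

lemma Y_open_coords_subset_stars: "Y_open_coords ((c, r), x) \<subseteq> stars c"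
proof
  fix a assume "a \<in> Y_open_coords ((c, r), x)"
  then show "a \<in> stars c" by (cases "c a") (auto simp: Y_open_coords_def Y_coord_def stars_def)
qed

lemma stars_update: "v \<noteq> Star \<Longrightarrow> stars (c(a := v)) = stars c - {a}"
  by (auto simp: stars_def)

lemma stars_comp: "stars (c \<circ> \<sigma>) = \<sigma> -` stars c"
  by (auto simp: stars_def)

lemma Y_cellsD:
  assumes "(c, r) \<in> Y_cells A"
  shows "stars c \<subseteq> A" and "strict_linear_order_on (stars c) r"
  using assms unfolding Y_cells_def by (auto simp: stars_def)

lemma finite_stars_Y_cells: "finite A \<Longrightarrow> (c, r) \<in> Y_cells A \<Longrightarrow> finite (stars c)"
  by (meson Y_cellsD(1) finite_subset)

lemma Y_face_eq:
  assumes "finite (stars c)" "strict_linear_order_on (stars c) r" "1 \<le> i" "i \<le> card (stars c)"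
  obtains a where "a \<in> stars c" "order_rank (stars c) r a = i - 1"
    "Y_face i e (c, r) = (c(a := if e then One else Zero), r \<inter> (stars c - {a}) \<times> (stars c - {a}))"
proof -
  have "i - 1 \<in> order_rank (stars c) r ` stars c"
    unfolding order_rank_image[OF assms(1,2)] using assms(3,4) by simp
  then obtain a where a: "a \<in> stars c" "order_rank (stars c) r a = i - 1"
    by (metis imageE)
  have "ith_star i (c, r) = a"
    unfolding ith_star_def
  proof (rule the_equality)
    fix b
    assume "b \<in> stars (fst (c, r)) \<and> card {b' \<in> stars (fst (c, r)). (b', b) \<in> snd (c, r)} = i - 1"
    then have "b \<in> stars c" "order_rank (stars c) r b = order_rank (stars c) r a"
      using a(2) by (simp_all add: order_rank_def)
    then show "b = a" using inj_on_order_rank[OF assms(1,2)] a(1) by (meson inj_onD)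
  qed (use a in \<open>simp add: order_rank_def\<close>)
  then show ?thesis
    by (intro that[OF a]) (simp add: Y_face_def Let_def stars_update)
qed

lemma Y_coord_face:
  assumes fin: "finite (stars c)" and slo: "strict_linear_order_on (stars c) r"
    and a: "a \<in> stars c" "order_rank (stars c) r a = i - 1"
    and i: "1 \<le> i" and len: "length x + 1 = card (stars c)"
  shows "Y_coord ((c(a := if e then One else Zero), r \<inter> (stars c - {a}) \<times> (stars c - {a})), x)
       = Y_coord ((c, r), ins_at i (eps_real e) x)"
proof
  fix b
  let ?rk = "order_rank (stars c) r"
  have irr: "irrefl r" using slo by (simp add: strict_linear_order_on_def)
  have il: "i - 1 \<le> length x"
    using order_rank_less_card[OF fin irr a(1)] a(2) len by simp
  consider "b = a" | "b \<noteq> a" "c b \<noteq> Star" | "b \<in> stars c - {a}"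
    by (auto simp: stars_def)
  then show "Y_coord ((c(a := if e then One else Zero), r \<inter> (stars c - {a}) \<times> (stars c - {a})), x) b
           = Y_coord ((c, r), ins_at i (eps_real e) x) b"
  proof cases
    case 1
    then show ?thesis
      using a ins_at_nth[OF i il, of "i - 1"] il by (simp add: Y_coord_def stars_def eps_real_def)
  next
    case 2
    then show ?thesis by (simp add: Y_coord_def split: cv.split)
  next
    case 3
    have star: "c b = Star" using 3 by (simp add: stars_def)
    have "?rk b \<noteq> i - 1"
      using 3 a inj_on_order_rank[OF fin slo] by (metis DiffE inj_onD singletonI)
    moreover have "?rk b < length x + 1"
      using order_rank_less_card[OF fin irr] 3 len by simp
    moreover have "(a, b) \<in> r \<longleftrightarrow> i - 1 < ?rk b"
      using order_rank_less_iff[OF fin slo a(1)] 3 a(2) by simp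
    \<comment> \<open>removing \<open>a\<close> from the order shifts the ranks above it down by one, exactly as
      inserting the \<open>i\<close>-th coordinate shifts the entries of \<open>x\<close> behind it up by one\<close>
    then have "order_rank (stars c - {a}) (r \<inter> (stars c - {a}) \<times> (stars c - {a})) b
        = (if i - 1 < ?rk b then ?rk b - 1 else ?rk b)"
      using order_rank_Diff_singleton[OF fin a(1) 3] by simp
    ultimately show ?thesis
      using star 3 ins_at_nth[OF i il, of "?rk b"] by (simp add: Y_coord_def stars_update)
  qed
qed

lemma Y_open_order_face:
  assumes "finite (stars c)" "strict_linear_order_on (stars c) r"
    and "a \<in> stars c" "order_rank (stars c) r a = i - 1"
    and "1 \<le> i" "length x + 1 = card (stars c)"
  shows "Y_open_order ((c(a := if e then One else Zero), r \<inter> (stars c - {a}) \<times> (stars c - {a})), x)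
       = Y_open_order ((c, r), ins_at i (eps_real e) x)"
proof -
  note coord = Y_coord_face[OF assms, of e]
  let ?O = "Y_open_coords ((c, r), ins_at i (eps_real e) x)"
  have "Y_coord ((c, r), ins_at i (eps_real e) x) a \<in> {0, 1}"
    using fun_cong[OF coord, of a] by (cases e) (simp_all add: Y_coord_def)
  then have "?O \<subseteq> stars c - {a}"
    using Y_open_coords_subset_stars by (fastforce simp: Y_open_coords_def)
  then show ?thesis
    unfolding Y_open_order_def Y_open_coords_def coord by auto
qed

lemma glue_step_Y_invariants:
  assumes "finite A" "glue_step (Y_cells A) Y_dim Y_face p q"
  shows "Y_coord p = Y_coord q \<and> Y_open_order p = Y_open_order q"
proof -
  obtain c r x i e where i: "1 \<le> i" "i \<le> card (stars c)" and cr: "(c, r) \<in> Y_cells A"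
    and p: "p = (Y_face i e (c, r), x)" and q: "q = ((c, r), ins_at i (eps_real e) x)"
    and len: "length (ins_at i (eps_real e) x) = card (stars c)"
    using assms(2) unfolding glue_step_def cube_pts_def Y_dim_def by fastforce
  have fin: "finite (stars c)" and slo: "strict_linear_order_on (stars c) r"
    using finite_stars_Y_cells[OF assms(1) cr] Y_cellsD(2)[OF cr] .
  obtain a where "a \<in> stars c" "order_rank (stars c) r a = i - 1"
    "Y_face i e (c, r) = (c(a := if e then One else Zero), r \<inter> (stars c - {a}) \<times> (stars c - {a}))"
    using Y_face_eq[OF fin slo i] .
  moreover have "length x + 1 = card (stars c)" using len by (simp add: ins_at_def)
  ultimately show ?thesis
    using Y_coord_face[OF fin slo _ _ i(1)] Y_open_order_face[OF fin slo _ _ i(1)] p q by simp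
qed

lemma real_cls_Y_invariants:
  assumes "finite A" "q \<in> real_cls (Y_cells A) Y_dim Y_face p"
  shows "Y_coord p = Y_coord q" and "Y_open_order p = Y_open_order q"
  using equivclp_invariant[of "glue_step (Y_cells A) Y_dim Y_face" p q "\<lambda>p. (Y_coord p, Y_open_order p)"]
    glue_step_Y_invariants[OF assms(1)] assms(2)
  by (auto simp: real_cls_def)

lemma Y_coord_eq_if_real_cls_eq:
  assumes "finite A" "real_cls (Y_cells A) Y_dim Y_face p = real_cls (Y_cells A) Y_dim Y_face q"
  shows "Y_coord p = Y_coord q"
proof -
  have "p \<in> real_cls (Y_cells A) Y_dim Y_face p"
    by (simp add: real_cls_def)
  then have "p \<in> real_cls (Y_cells A) Y_dim Y_face q"
    unfolding assms(2) .
  from real_cls_Y_invariants(1)[OF assms(1) this] show ?thesis by simp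
qed

lemma Y_coord_cell_act:
  assumes "bij \<sigma>"
  shows "Y_coord (cell_act cr \<sigma>, x) a = Y_coord (cr, x) (\<sigma> a)"
  using order_rank_vimage[OF assms]
  by (cases cr) (simp add: Y_coord_def cell_act_def stars_comp split: cv.split)

lemma Y_open_order_cell_act:
  assumes "bij \<sigma>"
  shows "Y_open_order (cell_act cr \<sigma>, x) = {(a, b). (\<sigma> a, \<sigma> b) \<in> Y_open_order (cr, x)}"
  unfolding Y_open_order_def Y_open_coords_def Y_coord_cell_act[OF assms]
  by (auto simp: cell_act_def)

lemma strict_linear_order_on_Y_open_order:
  assumes "(c, r) \<in> Y_cells A"
  shows "strict_linear_order_on (Y_open_coords ((c, r), x)) (Y_open_order ((c, r), x))"
  unfolding Y_open_order_def
  using strict_linear_order_on_restrict[OF Y_cellsD(2)[OF assms] Y_open_coords_subset_stars] by simp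

lemma cell_act_fixes_open_coords:
  assumes "finite A" "(c, r) \<in> Y_cells A" "bij \<sigma>"
    and "(cell_act (c, r) \<sigma>, x) \<in> real_cls (Y_cells A) Y_dim Y_face ((c, r), x)"
    and "a \<in> Y_open_coords ((c, r), x)"
  shows "\<sigma> a = a"
proof (rule strict_linear_order_automorphism_fixes)
  let ?p = "((c, r), x)"
  note invariants = real_cls_Y_invariants[OF assms(1,4)]
  show "finite (Y_open_coords ?p)"
    using finite_stars_Y_cells[OF assms(1,2)] Y_open_coords_subset_stars by (rule finite_subset[rotated])
  have "Y_coord ?p (\<sigma> b) = Y_coord ?p b" for b
    using invariants(1) Y_coord_cell_act[OF assms(3)] by metis
  then show "\<sigma> -` Y_open_coords ?p = Y_open_coords ?p"
    by (simp add: Y_open_coords_def)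
  show "{(a, b). (\<sigma> a, \<sigma> b) \<in> Y_open_order ?p} = Y_open_order ?p"
    using invariants(2) Y_open_order_cell_act[OF assms(3)] by simp
  show "strict_linear_order_on (Y_open_coords ?p) (Y_open_order ?p)"
    by (rule strict_linear_order_on_Y_open_order[OF assms(2)])
qed (fact assms)+

lemma continuous_on_Y_coord:
  assumes "finite (stars c)" "irrefl r"
    and "\<And>j. j < card (stars c) \<Longrightarrow> continuous_on T (\<lambda>s. \<beta> s ! j)"
  shows "continuous_on T (\<lambda>s. Y_coord ((c, r), \<beta> s) a)"
proof (cases "c a")
  case Star
  then have "order_rank (stars c) r a < card (stars c)"
    using order_rank_less_card[OF assms(1,2)] by (simp add: stars_def)
  then show ?thesis using Star assms(3) by (simp add: Y_coord_def)
qed (simp_all add: Y_coord_def)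

lemma Y_dpath_coord_ivt:
  assumes "finite A" "\<alpha> \<in> Y_dpaths A" "a \<in> A" "0 \<le> y" "y \<le> 1"
  obtains s c r x where "s \<in> {0..1}" "((c, r), x) \<in> cube_pts (Y_cells A) Y_dim"
    "\<alpha> s = real_cls (Y_cells A) Y_dim Y_face ((c, r), x)" "Y_coord ((c, r), x) a = y"
proof -
  let ?cls = "real_cls (Y_cells A) Y_dim Y_face"
  obtain m t c \<beta> where m: "1 \<le> m" and t0: "t 0 = 0" and tm: "t m = 1"
    and t_step: "\<And>k. k < m \<Longrightarrow> t k < t (Suc k)"
    and cell: "\<And>k. k \<in> {1..m} \<Longrightarrow> c k \<in> Y_cells A"
    and cont: "\<And>k j. k \<in> {1..m} \<Longrightarrow> j < Y_dim (c k) \<Longrightarrow>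
                 continuous_on {t (k - 1)..t k} (\<lambda>s. \<beta> k s ! j)"
    and pts: "\<And>k s. k \<in> {1..m} \<Longrightarrow> s \<in> {t (k - 1)..t k} \<Longrightarrow>
                (c k, \<beta> k s) \<in> cube_pts (Y_cells A) Y_dim"
    and \<alpha>_seg: "\<And>k s. k \<in> {1..m} \<Longrightarrow> s \<in> {t (k - 1)..t k} \<Longrightarrow> \<alpha> s = ?cls (c k, \<beta> k s)"
    and \<alpha>0: "\<alpha> 0 = ?cls (Y_zero, [])" and \<alpha>1: "\<alpha> 1 = ?cls (Y_one A, [])"
    using dpathsE[OF assms(2)[unfolded Y_dpaths_def]] by blast
  have t_le: "t (k - 1) \<le> t k" if "k \<in> {1..m}" for k
    using t_step[of "k - 1"] that by (cases k) auto
  define f where "f k s = Y_coord (c k, \<beta> k s) a" for k s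
  have "\<alpha> (t 0) = ?cls (c 1, \<beta> 1 (t 0))"
    by (rule \<alpha>_seg) (use m t_le[of 1] in auto)
  with \<alpha>0 t0 have "Y_coord (c 1, \<beta> 1 (t 0)) = Y_coord (Y_zero, [])"
    by (intro Y_coord_eq_if_real_cls_eq[OF assms(1)]) simp
  then have f_start: "f 1 (t 0) = 0" by (simp add: f_def Y_coord_def Y_zero_def)
  have "\<alpha> (t m) = ?cls (c m, \<beta> m (t m))"
    by (rule \<alpha>_seg) (use m t_le[of m] in auto)
  with \<alpha>1 tm have "Y_coord (c m, \<beta> m (t m)) = Y_coord (Y_one A, [])"
    by (intro Y_coord_eq_if_real_cls_eq[OF assms(1)]) simp
  then have f_end: "f m (t m) = 1" using assms(3) by (simp add: f_def Y_coord_def Y_one_def)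
  have f_link: "f k (t k) = f (Suc k) (t k)" if "1 \<le> k" "k < m" for k
  proof -
    have "\<alpha> (t k) = ?cls (c k, \<beta> k (t k))"
      by (rule \<alpha>_seg) (use that t_le[of k] in auto)
    moreover have "\<alpha> (t k) = ?cls (c (Suc k), \<beta> (Suc k) (t k))"
      by (rule \<alpha>_seg) (use that t_le[of "Suc k"] in auto)
    ultimately show ?thesis
      unfolding f_def using Y_coord_eq_if_real_cls_eq[OF assms(1)] by metis
  qed
  have f_cont: "continuous_on {t (k - 1)..t k} (f k)" if k: "k \<in> {1..m}" for k
  proof -
    obtain cc rr where ck: "c k = (cc, rr)" by fastforce
    have cc: "(cc, rr) \<in> Y_cells A" using cell[OF k] ck by simp
    show ?thesis
      unfolding f_def ck
      using finite_stars_Y_cells[OF assms(1) cc] Y_cellsD(2)[OF cc] cont[OF k] ck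
      by (intro continuous_on_Y_coord) (auto simp: strict_linear_order_on_def Y_dim_def)
  qed
  obtain k s where k: "k \<in> {1..m}" and s: "s \<in> {t (k - 1)..t k}" "f k s = y"
    using piecewise_ivt[of m t f y, OF m t_le f_cont f_link] f_start f_end assms(4,5) by auto
  have "0 \<le> t (k - 1)" using lift_Suc_mono_le_bounded[of m t 0 "k - 1"] t_step k t0 by force
  moreover have "t k \<le> 1" using lift_Suc_mono_le_bounded[of m t k m] t_step k tm by simp
  ultimately have "s \<in> {0..1}" using s(1) by auto
  with s show ?thesis
    using that pts[OF k s(1)] \<alpha>_seg[OF k s(1)] unfolding f_def by (metis prod.collapse)
qed

theorem proposition3p2:
  fixes A :: "'a set"
  assumes "finite A"
  shows "\<forall>\<alpha>\<in>Y_dpaths A. \<forall>\<sigma>. \<sigma> permutes A \<longrightarrow>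
           (\<forall>t\<in>{0..1}. path_act \<alpha> \<sigma> t = \<alpha> t) \<longrightarrow> \<sigma> = id"
proof (intro ballI allI impI ext)
  fix \<alpha> \<sigma> a
  assume \<alpha>: "\<alpha> \<in> Y_dpaths A" and \<sigma>: "\<sigma> permutes A"
    and fixed: "\<forall>t\<in>{0..1}. path_act \<alpha> \<sigma> t = \<alpha> t"
  show "\<sigma> a = id a"
  proof (cases "a \<in> A")
    case True
    obtain s c r x where s: "s \<in> {0..1}" and pt: "((c, r), x) \<in> cube_pts (Y_cells A) Y_dim"
      and \<alpha>s: "\<alpha> s = real_cls (Y_cells A) Y_dim Y_face ((c, r), x)"
      and half: "Y_coord ((c, r), x) a = 1 / 2"
      by (rule Y_dpath_coord_ivt[OF assms \<alpha> True, where y = "1 / 2"]) auto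
    have cell: "(c, r) \<in> Y_cells A" using pt by (simp add: cube_pts_def)
    have "(cell_act (c, r) \<sigma>, x) \<in> pt_act (\<alpha> s) \<sigma>"
      unfolding \<alpha>s pt_act_def real_cls_def by force
    moreover have "pt_act (\<alpha> s) \<sigma> = \<alpha> s"
      using fixed s unfolding path_act_def by blast
    ultimately have "(cell_act (c, r) \<sigma>, x) \<in> real_cls (Y_cells A) Y_dim Y_face ((c, r), x)"
      unfolding \<alpha>s by simp
    from cell_act_fixes_open_coords[OF assms cell permutes_bij[OF \<sigma>] this] half
    show ?thesis by (simp add: Y_open_coords_def)
  qed (simp add: permutes_not_in[OF \<sigma>])
qed

end
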